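(* A convergence group $G$ is $g$-barrelled if and only if its locally quasi-convex modification $\tau(G)$ is $g$-barrelled.
   Context: All groups are abelian. A convergence group is an abelian group with a convergence structure (an assignment to each point $x$ of a collection of filters converging to $x$). This assignment must satisfy three conditions: point ultrafilters converge to their point; finite intersections of filters converging to $x$ converge to $x$; and finer filters converge. The group operation must be compatible: $\mathcal F\to x$, $\mathcal G\to y$ imply $\mathcal F-\mathcal G\to x-y$. Topological groups are convergence groups. $\mathbb T=\mathbb R/\mathbb Z$, $\mathbb T_+=\rho([-1/4,1/4])$ where $\rho:\mathbb R\to\mathbb T$ is the quotient map. $\Gamma G$ is the group of continuous homomorphisms $G\to\mathbb T$, and $\Gamma_s G$ is $\Gamma G$ with the topology of pointwise convergence. A set $M\subseteq\Gamma G$ is equicontinuous if for every filter $\mathcal F\to0$ in $G$, the filter generated by $\{\varphi(x):\varphi\in M,x\in F\}$, $F\in\mathcal F$, converges to $0$ in $\mathbb T$. A convergence group $G$ is $g$-barrelled if every compact subset of $\Gamma_s G$ is equicontinuous. A subset $A$ of a topological group $G$ is quasi-convex if for every $x\notin A$ there is a continuous character $\varphi$ with $\varphi(A)\subseteq\mathbb T_+$ and $\varphi(x)\notin\mathbb T_+$. A topological group is locally quasi-convex if it has a zero neighbourhood base of quasi-convex sets. The locally quasi-convex modification $\tau(G)$ of a convergence group $G$ is the finest locally quasi-convex group topology on $G$ coarser than the convergence structure of $G$. *)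

theory Defs
  imports "HOL-Analysis.Analysis"
begin

text \<open>A convergence structure on an abelian group 'a is a relation conv F x
  meaning "the filter F converges to x". In Isabelle's filter order, F \<le> G means
  F is finer than G, and sup F G is the intersection of the filters.\<close>

definition convergence_group :: "('a::ab_group_add filter \<Rightarrow> 'a \<Rightarrow> bool) \<Rightarrow> bool" where
  "convergence_group conv \<longleftrightarrow>
     (\<forall>x. conv (principal {x}) x) \<and>
     (\<forall>F G x. conv F x \<and> conv G x \<longrightarrow> conv (sup F G) x) \<and>
     (\<forall>F G x. conv F x \<and> G \<le> F \<longrightarrow> conv G x) \<and>
     (\<forall>F G x y. conv F x \<and> conv G y \<longrightarrow>
        conv (filtermap (\<lambda>(a, b). a - b) (F \<times>\<^sub>F G)) (x - y))"

text \<open>The circle group T = R/Z, realised as the image of the quotient map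
  rho : R \<rightarrow> C, rho t = exp(2 pi i t) (a topological group isomorphism R/Z \<cong> rho R).
  The group operation of T becomes complex multiplication, 0 of T becomes 1.\<close>

definition rho :: "real \<Rightarrow> complex" where
  "rho t = cis (2 * pi * t)"

definition Tcirc :: "complex set" where
  "Tcirc = range rho"

definition Tplus :: "complex set" where
  "Tplus = rho ` {-1/4 .. 1/4}"

definition is_char :: "('a::ab_group_add \<Rightarrow> complex) \<Rightarrow> bool" where
  "is_char \<phi> \<longleftrightarrow> (\<forall>x. \<phi> x \<in> Tcirc) \<and> (\<forall>x y. \<phi> (x + y) = \<phi> x * \<phi> y)"

definition Gamma :: "('a::ab_group_add filter \<Rightarrow> 'a \<Rightarrow> bool) \<Rightarrow> ('a \<Rightarrow> complex) set" where
  "Gamma conv = {\<phi>. is_char \<phi> \<and> (\<forall>F x. conv F x \<longrightarrow> filterlim \<phi> (nhds (\<phi> x)) F)}"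

text \<open>Equicontinuity: for every F \<rightarrow> 0, the filter generated by the sets
  {phi x | phi \<in> M, x \<in> A}, A \<in> F, converges to the neutral element of T.\<close>
definition equicontinuous ::
    "('a::ab_group_add filter \<Rightarrow> 'a \<Rightarrow> bool) \<Rightarrow> ('a \<Rightarrow> complex) set \<Rightarrow> bool" where
  "equicontinuous conv M \<longleftrightarrow>
     (\<forall>F. conv F 0 \<longrightarrow>
        filterlim (\<lambda>(\<phi>, x). \<phi> x) (nhds 1) (principal M \<times>\<^sub>F F))"

text \<open>Gamma_s G is Gamma G with the topology of pointwise convergence, i.e. the
  subspace topology of the product topology on 'a \<Rightarrow> complex; compactness of a
  subset of Gamma G is therefore compactness in the product topology.\<close>
definition g_barrelled :: "('a::ab_group_add filter \<Rightarrow> 'a \<Rightarrow> bool) \<Rightarrow> bool" where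
  "g_barrelled conv \<longleftrightarrow>
     (\<forall>M. M \<subseteq> Gamma conv \<and> compact M \<longrightarrow> equicontinuous conv M)"

definition group_topology :: "'a::ab_group_add topology \<Rightarrow> bool" where
  "group_topology T \<longleftrightarrow> topspace T = UNIV \<and>
     continuous_map (prod_topology T T) T (\<lambda>(x, y). x - y)"

definition cont_char :: "'a::ab_group_add topology \<Rightarrow> ('a \<Rightarrow> complex) \<Rightarrow> bool" where
  "cont_char T \<phi> \<longleftrightarrow> is_char \<phi> \<and> continuous_map T euclidean \<phi>"

definition quasi_convex :: "'a::ab_group_add topology \<Rightarrow> 'a set \<Rightarrow> bool" where
  "quasi_convex T A \<longleftrightarrow>
     (\<forall>x. x \<notin> A \<longrightarrow> (\<exists>\<phi>. cont_char T \<phi> \<and> \<phi> ` A \<subseteq> Tplus \<and> \<phi> x \<notin> Tplus))"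

definition locally_quasi_convex :: "'a::ab_group_add topology \<Rightarrow> bool" where
  "locally_quasi_convex T \<longleftrightarrow> group_topology T \<and>
     (\<forall>U. openin T U \<and> 0 \<in> U \<longrightarrow>
        (\<exists>V. quasi_convex T V \<and> V \<subseteq> U \<and> (\<exists>W. openin T W \<and> 0 \<in> W \<and> W \<subseteq> V)))"

definition conv_of :: "'a topology \<Rightarrow> 'a filter \<Rightarrow> 'a \<Rightarrow> bool" where
  "conv_of T F x \<longleftrightarrow> F \<le> nhdsin T x"

definition coarser_than_conv :: "'a topology \<Rightarrow> ('a filter \<Rightarrow> 'a \<Rightarrow> bool) \<Rightarrow> bool" where
  "coarser_than_conv T conv \<longleftrightarrow> (\<forall>F x. conv F x \<longrightarrow> conv_of T F x)"

definition lqc_modification ::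
    "('a::ab_group_add filter \<Rightarrow> 'a \<Rightarrow> bool) \<Rightarrow> 'a topology" where
  "lqc_modification conv =
     (THE T. locally_quasi_convex T \<and> coarser_than_conv T conv \<and>
        (\<forall>T'. locally_quasi_convex T' \<and> coarser_than_conv T' conv \<longrightarrow>
              (\<forall>S. openin T' S \<longrightarrow> openin T S)))"

end

theory Submission
  imports Defs
begin

text \<open>
  The locally quasi-convex modification of a convergence group G is
  described explicitly as a polar topology: a set U is open iff every x \<in> U has
  a neighbourhood x + {y. \<phi> y \<in> S for all \<phi> \<in> M} inside U, where M is a set
  of characters equicontinuous for G and S is a neighbourhood of 1 in T.

  Finally G and tau(G) have the same continuous characters and the
  same equicontinuous sets of characters, which gives the corollary directly.
\<close>

section \<open>The circle group and characters\<close>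

lemma Tcirc_eq: "Tcirc = {z. cmod z = 1}"
proof (intro set_eqI iffI)
  fix z assume "z \<in> Tcirc" thus "z \<in> {z. cmod z = 1}" by (auto simp: Tcirc_def rho_def)
next
  fix z assume "z \<in> {z. cmod z = 1}"
  hence z: "cmod z = 1" by simp
  hence "cis (Arg z) = sgn z" by (intro cis_Arg) auto
  also have "sgn z = z" using z by (simp add: sgn_div_norm)
  finally have "rho (Arg z / (2*pi)) = z" by (simp add: rho_def)
  thus "z \<in> Tcirc" unfolding Tcirc_def by (metis rangeI)
qed

lemma Tplus_eq: "Tplus = {z. cmod z = 1 \<and> Re z \<ge> 0}"
proof (intro set_eqI iffI)
  fix z assume "z \<in> Tplus"
  then obtain t where t: "-1/4 \<le> t" "t \<le> 1/4" "z = cis (2*pi*t)"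
    by (auto simp: Tplus_def rho_def)
  have "2*pi*t \<le> 2*pi*(1/4)" "2*pi*(-1/4) \<le> 2*pi*t"
    using t(1,2) by (intro mult_left_mono; simp)+
  hence "0 \<le> cos (2*pi*t)" by (intro cos_ge_zero) auto
  thus "z \<in> {z. cmod z = 1 \<and> Re z \<ge> 0}" using t by simp
next
  fix z assume "z \<in> {z. cmod z = 1 \<and> Re z \<ge> 0}"
  hence z: "cmod z = 1" "Re z \<ge> 0" by auto
  have sq: "(Re z)^2 + (Im z)^2 = 1" using z(1) by (metis cmod_power2 one_power2)
  have "\<bar>Im z\<bar> \<le> 1" using abs_Im_le_cmod[of z] z(1) by simp
  hence b: "-1 \<le> Im z" "Im z \<le> 1" by auto
  define \<theta> where "\<theta> = arcsin (Im z)"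
  have "sin \<theta> = Im z" using b by (simp add: \<theta>_def)
  moreover have "cos \<theta> = Re z" using b z(2) sq by (simp add: \<theta>_def cos_arcsin real_sqrt_unique)
  ultimately have "rho (\<theta>/(2*pi)) = z" by (simp add: rho_def complex_eq_iff)
  moreover have "-(pi/2) \<le> \<theta>" "\<theta> \<le> pi/2" using b arcsin_bounded by (auto simp: \<theta>_def)
  hence "\<theta>/(2*pi) \<in> {-1/4..1/4}" by (auto simp: field_simps)
  ultimately show "z \<in> Tplus" unfolding Tplus_def by (metis image_eqI)
qed

lemma char_norm: "is_char \<phi> \<Longrightarrow> cmod (\<phi> x) = 1"
  by (auto simp: is_char_def Tcirc_eq)

lemma char_add: "is_char \<phi> \<Longrightarrow> \<phi> (x + y) = \<phi> x * \<phi> y"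
  by (auto simp: is_char_def)

lemma char_zero:
  assumes "is_char \<phi>" shows "\<phi> 0 = 1"
proof -
  have "\<phi> 0 = \<phi> 0 * \<phi> 0" using char_add[OF assms, of 0 0] by simp
  moreover have "\<phi> 0 \<noteq> 0" using char_norm[OF assms, of 0] by auto
  ultimately show ?thesis by (metis mult_cancel_left2)
qed

lemma char_diff:
  assumes "is_char \<phi>" shows "\<phi> (x - y) = \<phi> x / \<phi> y"
proof -
  have "\<phi> x = \<phi> (x - y) * \<phi> y" using char_add[OF assms, of "x - y" y] by simp
  moreover have "\<phi> y \<noteq> 0" using char_norm[OF assms, of y] by auto
  ultimately show ?thesis by simp
qed

lemma char_power: "is_char \<phi> \<Longrightarrow> is_char (\<lambda>x. \<phi> x ^ k)"
  by (auto simp: is_char_def Tcirc_eq norm_power power_mult_distrib)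

lemma char_doubling:
  assumes "is_char \<phi>"
  shows "\<phi> (((\<lambda>y. y + y) ^^ j) y) = \<phi> y ^ (2^j)"
proof (induction j)
  case (Suc j)
  have "\<phi> (((\<lambda>y. y + y) ^^ Suc j) y) = \<phi> (((\<lambda>y. y + y) ^^ j) y) ^ 2"
    by (simp add: char_add[OF assms] power2_eq_square)
  also have "\<dots> = \<phi> y ^ (2^Suc j)" using Suc by (simp add: power_mult[symmetric] mult.commute)
  finally show ?case .
qed simp

text \<open>If z, z^2, ..., z^(2^n) all lie in T+, then Re z is within 2^-n of 1
  (each squaring at least doubles the distance 1 - Re z).\<close>
lemma dyadic_powers_Re_close:
  assumes "cmod z = 1" "\<forall>j\<le>n. Re (z ^ (2^j)) \<ge> 0"
  shows "1 - Re z \<le> 1 / 2^n"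
  using assms
proof (induction n arbitrary: z)
  case (Suc n)
  have Re_nonneg: "Re z \<ge> 0" using Suc.prems(2)[rule_format, of 0] by simp
  have "\<forall>j\<le>n. Re ((z^2) ^ (2^j)) \<ge> 0"
    using Suc.prems(2) by (auto simp: power_mult[symmetric] mult.commute)
  moreover have "cmod (z^2) = 1" using Suc.prems(1) by (simp add: norm_power)
  ultimately have IH: "1 - Re (z^2) \<le> 1/2^n" using Suc.IH by blast
  have "(Re z)^2 + (Im z)^2 = 1" using Suc.prems(1) by (metis cmod_power2 one_power2)
  hence "Re (z^2) = 2 * (Re z)^2 - 1" by (simp add: power2_eq_square)
  hence "1 - (Re z)^2 \<le> 1/2^(Suc n)" using IH by simp
  moreover have "Re z \<le> 1" using Suc.prems(1) abs_Re_le_cmod[of z] by simp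
  hence "(Re z)^2 \<le> Re z" using Re_nonneg by (simp add: power2_eq_square mult_left_le)
  ultimately show ?case by simp
qed simp

lemma unit_circle_dist_one: "cmod z = 1 \<Longrightarrow> (cmod (z - 1))^2 = 2 - 2 * Re z"
proof -
  assume "cmod z = 1"
  hence sq: "(Re z)^2 + (Im z)^2 = 1" by (metis cmod_power2 one_power2)
  have "(cmod (z - 1))^2 = (Re z - 1)^2 + (Im z)^2" by (simp add: cmod_power2)
  also have "\<dots> = 2 - 2 * Re z" using sq by (simp add: power2_eq_square algebra_simps)
  finally show ?thesis .
qed

text \<open>Every neighbourhood of 1 in T contains all points whose first n dyadic
  powers lie in T+, for n large enough.  This is the fact that makes polars of
  neighbourhoods equicontinuous.\<close>
lemma dyadic_powers_nhd:
  assumes "open S" "1 \<in> S"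
  obtains n where "\<And>z. cmod z = 1 \<Longrightarrow> (\<forall>j\<le>n. Re (z ^ (2^j)) \<ge> 0) \<Longrightarrow> z \<in> S"
proof -
  obtain e where e: "e > 0" "ball 1 e \<subseteq> S" using assms open_contains_ball by blast
  obtain n where "2 / e^2 < 2^n" using real_arch_pow[of 2 "2/e^2"] by auto
  hence n: "2 / 2^n < e^2" using e(1) by (simp add: field_simps)
  show ?thesis
  proof (rule that[of n])
    fix z :: complex assume z: "cmod z = 1" "\<forall>j\<le>n. Re (z ^ (2^j)) \<ge> 0"
    have "(cmod (z - 1))^2 < e^2"
      using dyadic_powers_Re_close[OF z] unit_circle_dist_one[OF z(1)] n by simp
    hence "cmod (z - 1) < e" using e(1) by (meson norm_ge_zero power_less_imp_less_base less_imp_le)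
    hence "z \<in> ball 1 e" by (simp add: dist_norm norm_minus_commute)
    thus "z \<in> S" using e(2) by blast
  qed
qed

lemma continuous_at_one_one_nhd:
  fixes f :: "complex \<times> complex \<Rightarrow> complex"
  assumes "isCont f (1,1)" "open S" "f (1,1) \<in> S"
  obtains S' where "open S'" "1 \<in> S'" "\<And>u v. u \<in> S' \<Longrightarrow> v \<in> S' \<Longrightarrow> f (u,v) \<in> S"
proof -
  have "(f \<longlongrightarrow> f (1,1)) (nhds (1,1))"
    using assms(1) by (simp add: tendsto_nhds_iff isCont_def)
  hence "eventually (\<lambda>p. f p \<in> S) (nhds (1,1))"
    using assms(2,3) by (rule topological_tendstoD)
  hence "eventually (\<lambda>p. f p \<in> S) (nhds 1 \<times>\<^sub>F nhds 1)" by (simp only: nhds_prod)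
  then obtain Q where Q: "eventually Q (nhds 1)" "\<And>x y. Q x \<Longrightarrow> Q y \<Longrightarrow> f (x,y) \<in> S"
    unfolding eventually_prod_same by blast
  then obtain S' where S': "open S'" "1 \<in> S'" "\<forall>x\<in>S'. Q x" unfolding eventually_nhds by blast
  show ?thesis by (rule that[OF S'(1,2)]) (use S'(3) Q(2) in blast)
qed

section \<open>Equicontinuous sets of characters\<close>

lemma eventually_prod_principal:
  "eventually P (principal M \<times>\<^sub>F F) \<longleftrightarrow> eventually (\<lambda>y. \<forall>\<phi>\<in>M. P (\<phi>, y)) F"
proof
  assume "eventually P (principal M \<times>\<^sub>F F)"
  then obtain Pf Pg where "eventually Pf (principal M)" "eventually Pg F"
    "\<forall>x y. Pf x \<longrightarrow> Pg y \<longrightarrow> P (x, y)" by (auto simp: eventually_prod_filter)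
  thus "eventually (\<lambda>y. \<forall>\<phi>\<in>M. P (\<phi>, y)) F"
    by (auto simp: eventually_principal elim: eventually_mono)
next
  assume "eventually (\<lambda>y. \<forall>\<phi>\<in>M. P (\<phi>, y)) F"
  thus "eventually P (principal M \<times>\<^sub>F F)"
    unfolding eventually_prod_filter
    by (intro exI[of _ "\<lambda>\<phi>. \<phi> \<in> M"] exI[of _ "\<lambda>y. \<forall>\<phi>\<in>M. P (\<phi>, y)"])
       (auto simp: eventually_principal)
qed

lemma equicontinuous_iff:
  "equicontinuous conv M \<longleftrightarrow>
   (\<forall>F. conv F 0 \<longrightarrow> (\<forall>S. open S \<and> 1 \<in> S \<longrightarrow> eventually (\<lambda>y. \<forall>\<phi>\<in>M. \<phi> y \<in> S) F))"
  unfolding equicontinuous_def tendsto_def eventually_prod_principal by auto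

definition equicont_chars :: "('a::ab_group_add filter \<Rightarrow> 'a \<Rightarrow> bool) \<Rightarrow> ('a \<Rightarrow> complex) set \<Rightarrow> bool" where
  "equicont_chars conv M \<longleftrightarrow> (\<forall>\<phi>\<in>M. is_char \<phi>) \<and> equicontinuous conv M"

definition common_preimage :: "('a \<Rightarrow> complex) set \<Rightarrow> complex set \<Rightarrow> 'a set" where
  "common_preimage M S = {y. \<forall>\<phi>\<in>M. \<phi> y \<in> S}"

lemma equicont_chars_char: "equicont_chars conv M \<Longrightarrow> \<phi> \<in> M \<Longrightarrow> is_char \<phi>"
  by (simp add: equicont_chars_def)

lemma equicont_chars_eventually:
  "equicont_chars conv M \<Longrightarrow> conv F 0 \<Longrightarrow> open S \<Longrightarrow> 1 \<in> S \<Longrightarrow>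
   eventually (\<lambda>y. y \<in> common_preimage M S) F"
  by (simp add: equicont_chars_def equicontinuous_iff common_preimage_def)

text \<open>Equicontinuous sets of characters form an ideal of sets; this makes the
  polar neighbourhoods below a neighbourhood filter.\<close>
lemma equicont_chars_Un:
  assumes "equicont_chars conv M" "equicont_chars conv N"
  shows "equicont_chars conv (M \<union> N)"
proof -
  have "eventually (\<lambda>y. \<forall>\<phi>\<in>M \<union> N. \<phi> y \<in> S) F"
    if "conv F 0" "open S" "1 \<in> S" for F S
    using equicont_chars_eventually[OF assms(1) that] equicont_chars_eventually[OF assms(2) that]
    by (rule eventually_elim2) (auto simp: common_preimage_def)
  thus ?thesis using assms by (auto simp: equicont_chars_def equicontinuous_iff)
qed

lemma equicont_chars_subset:
  assumes "equicont_chars conv M" "N \<subseteq> M"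
  shows "equicont_chars conv N"
proof -
  have "eventually (\<lambda>y. \<forall>\<phi>\<in>N. \<phi> y \<in> S) F" if "conv F 0" "open S" "1 \<in> S" for F S
    using equicont_chars_eventually[OF assms(1) that]
    by (rule eventually_mono) (use assms(2) in \<open>auto simp: common_preimage_def\<close>)
  thus ?thesis using assms by (auto simp: equicont_chars_def equicontinuous_iff)
qed

lemma equicont_chars_empty: "equicont_chars conv {}"
  by (simp add: equicont_chars_def equicontinuous_iff)

lemma equicont_chars_singleton:
  assumes "is_char \<phi>" "\<And>F. conv F 0 \<Longrightarrow> filterlim \<phi> (nhds 1) F"
  shows "equicont_chars conv {\<phi>}"
  using assms by (auto simp: equicont_chars_def equicontinuous_iff tendsto_def)

definition dyadic_powers :: "nat \<Rightarrow> ('a \<Rightarrow> complex) set \<Rightarrow> ('a \<Rightarrow> complex) set" where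
  "dyadic_powers n M = {\<lambda>x. \<phi> x ^ (2^j) | \<phi> j. \<phi> \<in> M \<and> j \<le> n}"

text \<open>Adding the dyadic powers keeps a set equicontinuous, because z \<mapsto> z^(2^j)
  is continuous at 1.\<close>
lemma equicont_chars_dyadic_powers:
  assumes M: "equicont_chars conv M"
  shows "equicont_chars conv (dyadic_powers n M)"
proof -
  have "eventually (\<lambda>y. \<forall>\<psi>\<in>dyadic_powers n M. \<psi> y \<in> S) F"
    if F: "conv F 0" and S: "open S" "1 \<in> S" for F S
  proof -
    let ?S' = "\<Inter>j\<le>n. (\<lambda>z. z ^ (2^j)) -` S"
    have "open ?S'"
      by (intro open_INT finite_atMost ballI open_vimage) (use S in \<open>auto intro!: continuous_intros\<close>)
    moreover have "1 \<in> ?S'" using S by auto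
    ultimately have "eventually (\<lambda>y. y \<in> common_preimage M ?S') F"
      by (rule equicont_chars_eventually[OF M F])
    thus ?thesis by (rule eventually_mono) (auto simp: dyadic_powers_def common_preimage_def)
  qed
  thus ?thesis using M
    by (auto simp: equicont_chars_def equicontinuous_iff dyadic_powers_def intro: char_power)
qed

lemma common_preimage_dyadic_powers:
  assumes "\<forall>\<phi>\<in>M. is_char \<phi>"
    and n: "\<And>z. cmod z = 1 \<Longrightarrow> (\<forall>j\<le>n. Re (z ^ (2^j)) \<ge> 0) \<Longrightarrow> z \<in> S"
  shows "common_preimage (dyadic_powers n M) Tplus \<subseteq> common_preimage M S"
proof
  fix y assume y: "y \<in> common_preimage (dyadic_powers n M) Tplus"
  have "\<phi> y \<in> S" if "\<phi> \<in> M" for \<phi>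
  proof (rule n)
    show "cmod (\<phi> y) = 1" using assms(1) that by (simp add: char_norm)
    have "\<phi> y ^ (2^j) \<in> Tplus" if "j \<le> n" for j
      using y \<open>\<phi> \<in> M\<close> that by (auto simp: common_preimage_def dyadic_powers_def)
    thus "\<forall>j\<le>n. Re (\<phi> y ^ (2^j)) \<ge> 0" by (simp add: Tplus_eq)
  qed
  thus "y \<in> common_preimage M S" by (simp add: common_preimage_def)
qed

section \<open>The polar topology\<close>

definition polar_nhd :: "('a::ab_group_add filter \<Rightarrow> 'a \<Rightarrow> bool) \<Rightarrow> 'a \<Rightarrow> 'a set \<Rightarrow> bool" where
  "polar_nhd conv x U \<longleftrightarrow>
     (\<exists>M S. equicont_chars conv M \<and> open S \<and> 1 \<in> S \<and> {y. y - x \<in> common_preimage M S} \<subseteq> U)"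

definition polar_topology :: "('a::ab_group_add filter \<Rightarrow> 'a \<Rightarrow> bool) \<Rightarrow> 'a topology" where
  "polar_topology conv = topology (\<lambda>U. \<forall>x\<in>U. polar_nhd conv x U)"

lemma polar_nhd_mono: "polar_nhd conv x U \<Longrightarrow> U \<subseteq> V \<Longrightarrow> polar_nhd conv x V"
  unfolding polar_nhd_def by blast

lemma polar_nhd_UNIV: "polar_nhd conv x UNIV"
  unfolding polar_nhd_def using equicont_chars_empty by blast

lemma polar_nhd_mem: "polar_nhd conv x U \<Longrightarrow> x \<in> U"
  unfolding polar_nhd_def common_preimage_def equicont_chars_def by (auto simp: char_zero)

lemma polar_nhd_Int:
  assumes "polar_nhd conv x U" "polar_nhd conv x V"
  shows "polar_nhd conv x (U \<inter> V)"
proof -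
  obtain M1 S1 M2 S2 where
    1: "equicont_chars conv M1" "open S1" "1 \<in> S1" "{y. y - x \<in> common_preimage M1 S1} \<subseteq> U" and
    2: "equicont_chars conv M2" "open S2" "1 \<in> S2" "{y. y - x \<in> common_preimage M2 S2} \<subseteq> V"
    using assms unfolding polar_nhd_def by blast
  have "{y. y - x \<in> common_preimage (M1 \<union> M2) (S1 \<inter> S2)} \<subseteq> U \<inter> V"
    using 1(4) 2(4) by (auto simp: common_preimage_def)
  thus ?thesis unfolding polar_nhd_def
    using equicont_chars_Un[OF 1(1) 2(1)] 1(2,3) 2(2,3) by blast
qed

lemma istopology_polar: "istopology (\<lambda>U. \<forall>x\<in>U. polar_nhd conv x U)"
  unfolding istopology_def by (meson IntE polar_nhd_Int Union_upper polar_nhd_mono UnionE)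

lemma openin_polar_topology: "openin (polar_topology conv) U \<longleftrightarrow> (\<forall>x\<in>U. polar_nhd conv x U)"
  unfolding polar_topology_def topology_inverse'[OF istopology_polar] ..

lemma topspace_polar_topology: "topspace (polar_topology conv) = UNIV"
  unfolding topspace_def using openin_polar_topology polar_nhd_UNIV by blast

lemma common_preimage_add:
  assumes "\<forall>\<phi>\<in>M. is_char \<phi>" "\<And>u v. u \<in> S' \<Longrightarrow> v \<in> S' \<Longrightarrow> u * v \<in> S"
    and "a \<in> common_preimage M S'" "b \<in> common_preimage M S'"
  shows "a + b \<in> common_preimage M S"
  using assms by (auto simp: common_preimage_def char_add)

lemma common_preimage_diff:
  assumes "\<forall>\<phi>\<in>M. is_char \<phi>" "\<And>u v. u \<in> S' \<Longrightarrow> v \<in> S' \<Longrightarrow> u / v \<in> S"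
    and "a \<in> common_preimage M S'" "b \<in> common_preimage M S'"
  shows "a - b \<in> common_preimage M S"
  using assms by (auto simp: common_preimage_def char_diff)

text \<open>Every polar neighbourhood contains an open set around its centre: the set
  of points of which it is still a polar neighbourhood.\<close>
lemma polar_nhd_open:
  assumes "polar_nhd conv x U"
  obtains W where "openin (polar_topology conv) W" "x \<in> W" "W \<subseteq> U"
proof -
  let ?W = "{y. polar_nhd conv y U}"
  have "polar_nhd conv y ?W" if "y \<in> ?W" for y
  proof -
    obtain M S where M: "equicont_chars conv M" "open S" "1 \<in> S"
        "{z. z - y \<in> common_preimage M S} \<subseteq> U"
      using \<open>y \<in> ?W\<close> unfolding polar_nhd_def by blast
    obtain S' where S': "open S'" "1 \<in> S'" "\<And>u v. u \<in> S' \<Longrightarrow> v \<in> S' \<Longrightarrow> u * v \<in> S"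
      using continuous_at_one_one_nhd[of "\<lambda>p. fst p * snd p" S] M(2,3)
      by (auto intro!: continuous_intros)
    have "polar_nhd conv z U" if "z - y \<in> common_preimage M S'" for z
    proof -
      have "w - y \<in> common_preimage M S" if "w - z \<in> common_preimage M S'" for w
        using common_preimage_add[OF _ S'(3) that \<open>z - y \<in> common_preimage M S'\<close>] M(1)
        by (simp add: equicont_chars_def)
      hence "{w. w - z \<in> common_preimage M S'} \<subseteq> U" using M(4) by blast
      thus ?thesis unfolding polar_nhd_def using M(1) S'(1,2) by blast
    qed
    thus ?thesis unfolding polar_nhd_def using M(1) S'(1,2) by blast
  qed
  hence "openin (polar_topology conv) ?W" by (simp add: openin_polar_topology)
  moreover have "?W \<subseteq> U" using polar_nhd_mem by blast
  ultimately show ?thesis using that assms by blast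
qed

lemma openin_polar_nhd: "openin (polar_topology conv) U \<Longrightarrow> x \<in> U \<Longrightarrow> polar_nhd conv x U"
  using openin_polar_topology by blast

lemma polar_nhd_eventually:
  "polar_nhd conv x U \<Longrightarrow> eventually (\<lambda>y. y \<in> U) (nhdsin (polar_topology conv) x)"
proof -
  assume "polar_nhd conv x U"
  then obtain W where "openin (polar_topology conv) W" "x \<in> W" "W \<subseteq> U"
    by (rule polar_nhd_open)
  thus ?thesis unfolding eventually_nhdsin topspace_polar_topology by blast
qed

lemma equicont_chars_preimage_nhd:
  assumes M: "equicont_chars conv M" "\<phi> \<in> M" and S: "open S" "\<phi> x \<in> S"
  shows "polar_nhd conv x {y. \<phi> y \<in> S}"
proof -
  have c: "is_char \<phi>" using M by (simp add: equicont_chars_def)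
  let ?S' = "{w. \<phi> x * w \<in> S}"
  have "open ?S'"
    using open_vimage[OF S(1), of "\<lambda>w. \<phi> x * w"] by (auto simp: vimage_def intro!: continuous_intros)
  moreover have "1 \<in> ?S'" using S(2) by simp
  moreover have "{y. y - x \<in> common_preimage {\<phi>} ?S'} \<subseteq> {y. \<phi> y \<in> S}"
  proof
    fix y assume "y \<in> {y. y - x \<in> common_preimage {\<phi>} ?S'}"
    moreover have "\<phi> y = \<phi> x * \<phi> (y - x)" using char_add[OF c, of x "y - x"] by simp
    ultimately show "y \<in> {y. \<phi> y \<in> S}" by (simp add: common_preimage_def)
  qed
  moreover have "equicont_chars conv {\<phi>}" using M equicont_chars_subset by blast
  ultimately show ?thesis unfolding polar_nhd_def by blast
qed

lemma equicont_chars_cont_char: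
  assumes "equicont_chars conv M" "\<phi> \<in> M"
  shows "cont_char (polar_topology conv) \<phi>"
  unfolding cont_char_def continuous_map topspace_polar_topology
proof (intro conjI allI impI)
  show "is_char \<phi>" using assms by (rule equicont_chars_char)
  fix S :: "complex set" assume "openin euclidean S"
  thus "openin (polar_topology conv) {x \<in> UNIV. \<phi> x \<in> S}"
    unfolding openin_polar_topology using equicont_chars_preimage_nhd[OF assms] by auto
qed auto

text \<open>Subtraction is continuous: a small quotient of character values is obtained
  from small values at (a - x) and (b - y).\<close>
lemma polar_topology_group: "group_topology (polar_topology conv)"
  unfolding group_topology_def continuous_map topspace_polar_topology topspace_prod_topology
proof (intro conjI allI impI)
  fix U assume U: "openin (polar_topology conv) U"
  show "openin (prod_topology (polar_topology conv) (polar_topology conv))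
          {p \<in> UNIV \<times> UNIV. (case p of (x, y) \<Rightarrow> x - y) \<in> U}"
    unfolding openin_prod_topology_alt
  proof (intro allI impI)
    fix x y assume "(x, y) \<in> {p \<in> UNIV \<times> UNIV. (case p of (x, y) \<Rightarrow> x - y) \<in> U}"
    hence "polar_nhd conv (x - y) U" using openin_polar_nhd[OF U] by simp
    then obtain M S where M: "equicont_chars conv M" "open S" "1 \<in> S"
        "{z. z - (x - y) \<in> common_preimage M S} \<subseteq> U"
      unfolding polar_nhd_def by blast
    obtain S' where S': "open S'" "1 \<in> S'" "\<And>u v. u \<in> S' \<Longrightarrow> v \<in> S' \<Longrightarrow> u / v \<in> S"
      using continuous_at_one_one_nhd[of "\<lambda>p. fst p / snd p" S] M(2,3)
      by (auto intro!: continuous_intros)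
    have "polar_nhd conv c {a. a - c \<in> common_preimage M S'}" for c
      unfolding polar_nhd_def using M(1) S'(1,2) by blast
    then obtain A B where
      A: "openin (polar_topology conv) A" "x \<in> A" "A \<subseteq> {a. a - x \<in> common_preimage M S'}" and
      B: "openin (polar_topology conv) B" "y \<in> B" "B \<subseteq> {b. b - y \<in> common_preimage M S'}"
      by (metis polar_nhd_open)
    have "a - b \<in> U" if "a \<in> A" "b \<in> B" for a b
    proof -
      have "a - x \<in> common_preimage M S'" "b - y \<in> common_preimage M S'"
        using A(3) B(3) that by auto
      hence "(a - x) - (b - y) \<in> common_preimage M S"
        using common_preimage_diff[of M S' S] S'(3) M(1) by (simp add: equicont_chars_def)
      hence "(a - b) - (x - y) \<in> common_preimage M S" by (simp add: algebra_simps)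
      thus ?thesis using M(4) by blast
    qed
    hence "A \<times> B \<subseteq> {p \<in> UNIV \<times> UNIV. (case p of (x, y) \<Rightarrow> x - y) \<in> U}" by auto
    thus "\<exists>A B. openin (polar_topology conv) A \<and> openin (polar_topology conv) B \<and> x \<in> A \<and> y \<in> B \<and>
            A \<times> B \<subseteq> {p \<in> UNIV \<times> UNIV. (case p of (x, y) \<Rightarrow> x - y) \<in> U}"
      using A(1,2) B(1,2) by blast
  qed
qed auto

lemma common_preimage_Tplus_quasi_convex:
  assumes "equicont_chars conv M"
  shows "quasi_convex (polar_topology conv) (common_preimage M Tplus)"
  unfolding quasi_convex_def
proof (intro allI impI)
  fix x assume "x \<notin> common_preimage M Tplus"
  then obtain \<psi> where \<psi>: "\<psi> \<in> M" "\<psi> x \<notin> Tplus" by (auto simp: common_preimage_def)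
  moreover have "\<psi> ` common_preimage M Tplus \<subseteq> Tplus" using \<psi>(1) by (auto simp: common_preimage_def)
  ultimately show "\<exists>\<phi>. cont_char (polar_topology conv) \<phi> \<and>
      \<phi> ` common_preimage M Tplus \<subseteq> Tplus \<and> \<phi> x \<notin> Tplus"
    using equicont_chars_cont_char[OF assms] by blast
qed

lemma common_preimage_Tplus_nhd:
  assumes "equicont_chars conv M"
  shows "polar_nhd conv 0 (common_preimage M Tplus)"
proof -
  have "{y. y - 0 \<in> common_preimage M {z. Re z > 0}} \<subseteq> common_preimage M Tplus"
    using assms by (auto simp: common_preimage_def Tplus_eq equicont_chars_def char_norm)
  thus ?thesis unfolding polar_nhd_def using assms open_halfspace_Re_gt[of 0] by force
qed

text \<open>Local quasi-convexity: a polar neighbourhood defined by M and S contains the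
  quasi-convex neighbourhood where all dyadic powers of M lie in T+.\<close>
lemma polar_topology_lqc: "locally_quasi_convex (polar_topology conv)"
  unfolding locally_quasi_convex_def
proof (intro conjI polar_topology_group allI impI)
  fix U assume "openin (polar_topology conv) U \<and> 0 \<in> U"
  then obtain M S where M: "equicont_chars conv M" "open S" "1 \<in> S"
      "{z. z - 0 \<in> common_preimage M S} \<subseteq> U"
    using openin_polar_nhd unfolding polar_nhd_def by blast
  obtain n where n: "\<And>z. cmod z = 1 \<Longrightarrow> (\<forall>j\<le>n. Re (z ^ (2^j)) \<ge> 0) \<Longrightarrow> z \<in> S"
    using dyadic_powers_nhd[OF M(2,3)] by blast
  define V where "V = common_preimage (dyadic_powers n M) Tplus"
  have N: "equicont_chars conv (dyadic_powers n M)" by (rule equicont_chars_dyadic_powers[OF M(1)])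
  have "quasi_convex (polar_topology conv) V"
    unfolding V_def by (rule common_preimage_Tplus_quasi_convex[OF N])
  moreover have "V \<subseteq> U"
    using common_preimage_dyadic_powers[of M n S] n M(1,4) by (auto simp: V_def equicont_chars_def)
  moreover obtain W where "openin (polar_topology conv) W" "0 \<in> W" "W \<subseteq> V"
    using polar_nhd_open[OF common_preimage_Tplus_nhd[OF N]] unfolding V_def by blast
  ultimately show "\<exists>V. quasi_convex (polar_topology conv) V \<and> V \<subseteq> U \<and>
      (\<exists>W. openin (polar_topology conv) W \<and> 0 \<in> W \<and> W \<subseteq> V)"
    by blast
qed

section \<open>The polar topology is the locally quasi-convex modification\<close>

lemma conv_translate_zero:
  assumes "convergence_group conv" "conv F x"
  shows "conv (filtermap (\<lambda>y. y - x) F) 0"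
proof -
  have "conv (principal {x}) x" using assms(1) by (simp add: convergence_group_def)
  hence "conv (filtermap (\<lambda>(a, b). a - b) (F \<times>\<^sub>F principal {x})) (x - x)"
    using assms unfolding convergence_group_def by blast
  thus ?thesis by (simp add: prod_filter_principal_singleton2 filtermap_filtermap)
qed

text \<open>Every filter converging in G converges in the polar topology, by equicontinuity
  applied to the translated filter.\<close>
lemma polar_topology_coarser:
  assumes "convergence_group conv"
  shows "coarser_than_conv (polar_topology conv) conv"
  unfolding coarser_than_conv_def conv_of_def le_filter_def
proof (intro allI impI)
  fix F x P assume F: "conv F x" and "eventually P (nhdsin (polar_topology conv) x)"
  then obtain U where U: "openin (polar_topology conv) U" "x \<in> U" "\<forall>z\<in>U. P z"
    unfolding eventually_nhdsin topspace_polar_topology by blast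
  then obtain M S where M: "equicont_chars conv M" "open S" "1 \<in> S"
      "{z. z - x \<in> common_preimage M S} \<subseteq> U"
    using openin_polar_nhd unfolding polar_nhd_def by blast
  have "eventually (\<lambda>y. y \<in> common_preimage M S) (filtermap (\<lambda>y. y - x) F)"
    using equicont_chars_eventually[OF M(1) conv_translate_zero[OF assms F] M(2,3)] .
  thus "eventually P F"
    unfolding eventually_filtermap by (rule eventually_mono) (use M(4) U(3) in blast)
qed

lemma group_topology_diff:
  assumes "group_topology T" "continuous_map T T f" "continuous_map T T g"
  shows "continuous_map T T (\<lambda>x. f x - g x)"
proof -
  have "continuous_map T (prod_topology T T) (\<lambda>x. (f x, g x))"
    using assms by (intro continuous_map_pairedI)
  hence "continuous_map T T ((\<lambda>(x, y). x - y) \<circ> (\<lambda>x. (f x, g x)))"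
    using assms(1) unfolding group_topology_def by (intro continuous_map_compose) auto
  thus ?thesis by (simp add: o_def)
qed

lemma group_topology_add:
  assumes "group_topology T" "continuous_map T T f" "continuous_map T T g"
  shows "continuous_map T T (\<lambda>x. f x + g x)"
proof -
  have "continuous_map T T (\<lambda>x. 0 - g x)"
    using assms by (intro group_topology_diff) (auto simp: group_topology_def)
  hence "continuous_map T T (\<lambda>x. f x - (0 - g x))"
    by (rule group_topology_diff[OF assms(1,2)])
  thus ?thesis by simp
qed

lemma group_topology_open_preimage:
  assumes "group_topology T" "continuous_map T T f" "openin T U"
  shows "openin T {x. f x \<in> U}"
  using openin_continuous_map_preimage[OF assms(2,3)] assms(1) by (simp add: group_topology_def)

lemma group_topology_doubling_nhd:
  assumes T: "group_topology T" and W: "openin T W" "0 \<in> W"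
  shows "\<exists>W'. openin T W' \<and> 0 \<in> W' \<and> (\<forall>y\<in>W'. \<forall>j\<le>n. ((\<lambda>y. y + y) ^^ j) y \<in> W)"
proof (induction n)
  case 0 show ?case using W by auto
next
  case (Suc n)
  then obtain W' where W': "openin T W'" "0 \<in> W'" "\<forall>y\<in>W'. \<forall>j\<le>n. ((\<lambda>y. y + y) ^^ j) y \<in> W"
    by blast
  have "continuous_map T T (\<lambda>y. y + y)" using T by (intro group_topology_add) auto
  hence "openin T (W \<inter> {y. y + y \<in> W'})"
    using group_topology_open_preimage[OF T _ W'(1)] W(1) by blast
  moreover have "((\<lambda>y. y + y) ^^ j) y \<in> W" if "y \<in> W" "y + y \<in> W'" "j \<le> Suc n" for y j
    using that W'(3) by (cases j) (auto simp: funpow_Suc_right simp del: funpow.simps)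
  ultimately show ?case using W(2) W'(2) by (intro exI[of _ "W \<inter> {y. y + y \<in> W'}"]) auto
qed

text \<open>The polar in T+ of a neighbourhood of 0 for a group topology coarser than G
  is equicontinuous for G.  This is where the dyadic-power estimate is used.\<close>
lemma polar_of_nhd_equicontinuous:
  assumes T: "group_topology T" and C: "coarser_than_conv T conv"
    and W: "openin T W" "0 \<in> W"
  shows "equicont_chars conv {\<phi>. cont_char T \<phi> \<and> \<phi> ` W \<subseteq> Tplus}" (is "equicont_chars conv ?M")
proof -
  have ch: "is_char \<phi>" if "\<phi> \<in> ?M" for \<phi> using that by (simp add: cont_char_def)
  have "eventually (\<lambda>y. \<forall>\<phi>\<in>?M. \<phi> y \<in> S) F" if F: "conv F 0" and S: "open S" "1 \<in> S" for F S
  proof -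
    obtain n where n: "\<And>z. cmod z = 1 \<Longrightarrow> (\<forall>j\<le>n. Re (z ^ (2^j)) \<ge> 0) \<Longrightarrow> z \<in> S"
      using dyadic_powers_nhd[OF S] by blast
    obtain W' where W': "openin T W'" "0 \<in> W'" "\<forall>y\<in>W'. \<forall>j\<le>n. ((\<lambda>y. y + y) ^^ j) y \<in> W"
      using group_topology_doubling_nhd[OF T W] by blast
    have "eventually (\<lambda>y. y \<in> W') (nhdsin T 0)"
      unfolding eventually_nhdsin using W'(1,2) by blast
    moreover have "F \<le> nhdsin T 0" using C F by (simp add: coarser_than_conv_def conv_of_def)
    ultimately have "eventually (\<lambda>y. y \<in> W') F" using filter_leD by blast
    thus ?thesis
    proof (rule eventually_mono, intro ballI)
      fix y \<phi> assume y: "y \<in> W'" and \<phi>: "\<phi> \<in> ?M"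
      have "Re (\<phi> y ^ (2^j)) \<ge> 0" if "j \<le> n" for j
      proof -
        have "\<phi> (((\<lambda>y. y + y) ^^ j) y) \<in> Tplus" using W'(3) y that \<phi> by blast
        thus ?thesis by (simp add: char_doubling[OF ch[OF \<phi>]] Tplus_eq)
      qed
      thus "\<phi> y \<in> S" using n char_norm[OF ch[OF \<phi>]] by blast
    qed
  qed
  thus ?thesis using ch by (simp add: equicont_chars_def equicontinuous_iff)
qed

text \<open>Every locally quasi-convex group topology T coarser than G is coarser than
  the polar topology: a quasi-convex neighbourhood V is exactly the set where its
  (equicontinuous) polar lies in T+.\<close>
lemma polar_topology_finest:
  assumes T: "locally_quasi_convex T" and C: "coarser_than_conv T conv" and S: "openin T S"
  shows "openin (polar_topology conv) S"
  unfolding openin_polar_topology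
proof
  fix x assume "x \<in> S"
  have gt: "group_topology T" using T by (simp add: locally_quasi_convex_def)
  have "continuous_map T T (\<lambda>b. b + x)"
    using gt by (intro group_topology_add) (auto simp: group_topology_def)
  hence "openin T {b. b + x \<in> S}" by (rule group_topology_open_preimage[OF gt _ S])
  moreover have "0 \<in> {b. b + x \<in> S}" using \<open>x \<in> S\<close> by simp
  ultimately obtain V W where V: "quasi_convex T V" "V \<subseteq> {b. b + x \<in> S}"
      and W: "openin T W" "0 \<in> W" "W \<subseteq> V"
    using T unfolding locally_quasi_convex_def by blast
  define M where "M = {\<phi>. cont_char T \<phi> \<and> \<phi> ` V \<subseteq> Tplus}"
  have "M \<subseteq> {\<phi>. cont_char T \<phi> \<and> \<phi> ` W \<subseteq> Tplus}" using W(3) by (auto simp: M_def)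
  hence M: "equicont_chars conv M"
    by (rule equicont_chars_subset[OF polar_of_nhd_equicontinuous[OF gt C W(1,2)]])
  have "y - x \<in> V" if "y - x \<in> common_preimage M {z. Re z > 0}" for y
  proof (rule ccontr)
    assume "y - x \<notin> V"
    then obtain \<phi> where "cont_char T \<phi>" "\<phi> ` V \<subseteq> Tplus" "\<phi> (y - x) \<notin> Tplus"
      using V(1) unfolding quasi_convex_def by blast
    moreover from this have "Re (\<phi> (y - x)) > 0" using that by (auto simp: M_def common_preimage_def)
    ultimately show False by (simp add: Tplus_eq char_norm cont_char_def)
  qed
  hence "{y. y - x \<in> common_preimage M {z. Re z > 0}} \<subseteq> S" using V(2) by force
  thus "polar_nhd conv x S"
    unfolding polar_nhd_def using M open_halfspace_Re_gt[of 0] by force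
qed

theorem lqc_modification_eq_polar_topology:
  assumes "convergence_group conv"
  shows "lqc_modification conv = polar_topology conv"
  unfolding lqc_modification_def
proof (rule the_equality)
  show "locally_quasi_convex (polar_topology conv) \<and> coarser_than_conv (polar_topology conv) conv \<and>
    (\<forall>T'. locally_quasi_convex T' \<and> coarser_than_conv T' conv \<longrightarrow>
      (\<forall>S. openin T' S \<longrightarrow> openin (polar_topology conv) S))"
    using polar_topology_lqc polar_topology_coarser[OF assms] polar_topology_finest by blast
next
  fix T assume "locally_quasi_convex T \<and> coarser_than_conv T conv \<and>
    (\<forall>T'. locally_quasi_convex T' \<and> coarser_than_conv T' conv \<longrightarrow> (\<forall>S. openin T' S \<longrightarrow> openin T S))"
  thus "T = polar_topology conv" unfolding topology_eq
    using polar_topology_lqc polar_topology_coarser[OF assms] polar_topology_finest by blast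
qed

text \<open>Every G-continuous character is continuous for the polar topology, since the
  singleton of a continuous character is equicontinuous; the converse holds because
  the polar topology is coarser.\<close>
lemma Gamma_polar_topology:
  assumes G: "convergence_group conv"
  shows "Gamma (conv_of (polar_topology conv)) = Gamma conv"
proof (intro set_eqI iffI)
  fix \<phi> assume "\<phi> \<in> Gamma (conv_of (polar_topology conv))"
  thus "\<phi> \<in> Gamma conv"
    using polar_topology_coarser[OF G] by (auto simp: Gamma_def coarser_than_conv_def)
next
  fix \<phi> assume \<phi>: "\<phi> \<in> Gamma conv"
  hence c: "is_char \<phi>" by (simp add: Gamma_def)
  have "filterlim \<phi> (nhds (\<phi> 0)) F" if "conv F 0" for F using \<phi> that by (simp add: Gamma_def)
  hence E: "equicont_chars conv {\<phi>}"
    by (intro equicont_chars_singleton[OF c]) (simp add: char_zero[OF c])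
  have "filterlim \<phi> (nhds (\<phi> x)) F" if "F \<le> nhdsin (polar_topology conv) x" for F x
    unfolding tendsto_def
  proof (intro allI impI)
    fix S assume "open S" "\<phi> x \<in> S"
    hence "polar_nhd conv x {y. \<phi> y \<in> S}" using equicont_chars_preimage_nhd[OF E] by blast
    from filter_leD[OF that polar_nhd_eventually[OF this]] show "eventually (\<lambda>y. \<phi> y \<in> S) F"
      by simp
  qed
  thus "\<phi> \<in> Gamma (conv_of (polar_topology conv))" using c by (simp add: Gamma_def conv_of_def)
qed

text \<open>A set of characters is equicontinuous for G iff it is equicontinuous for tau(G):
  G-equicontinuous sets define the neighbourhoods of tau(G), and tau(G) is coarser.\<close>
lemma equicontinuous_polar_topology_iff:
  assumes G: "convergence_group conv" and M: "\<forall>\<phi>\<in>M. is_char \<phi>"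
  shows "equicontinuous (conv_of (polar_topology conv)) M \<longleftrightarrow> equicontinuous conv M"
proof
  assume "equicontinuous (conv_of (polar_topology conv)) M"
  thus "equicontinuous conv M"
    using polar_topology_coarser[OF G] by (auto simp: equicontinuous_def coarser_than_conv_def)
next
  assume "equicontinuous conv M"
  hence E: "equicont_chars conv M" using M by (simp add: equicont_chars_def)
  have "eventually (\<lambda>y. \<forall>\<phi>\<in>M. \<phi> y \<in> S) F"
    if "F \<le> nhdsin (polar_topology conv) 0" "open S" "1 \<in> S" for F S
  proof -
    have "polar_nhd conv 0 (common_preimage M S)" unfolding polar_nhd_def using E that(2,3) by auto
    from filter_leD[OF that(1) polar_nhd_eventually[OF this]] show ?thesis
      by (simp add: common_preimage_def)
  qed
  thus "equicontinuous (conv_of (polar_topology conv)) M"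
    by (simp add: equicontinuous_iff conv_of_def)
qed

text \<open>Both sides quantify over the same compact sets of characters and demand the same
  equicontinuity, so the two notions of g-barrelledness coincide.\<close>
theorem corollary2p12:
  fixes conv :: "'a::ab_group_add filter \<Rightarrow> 'a \<Rightarrow> bool"
  assumes "convergence_group conv"
  shows "g_barrelled conv \<longleftrightarrow> g_barrelled (conv_of (lqc_modification conv))"
proof -
  have "\<forall>\<phi>\<in>M. is_char \<phi>" if "M \<subseteq> Gamma conv" for M using that by (auto simp: Gamma_def)
  hence "equicontinuous (conv_of (polar_topology conv)) M \<longleftrightarrow> equicontinuous conv M"
    if "M \<subseteq> Gamma conv" for M
    using equicontinuous_polar_topology_iff[OF assms] that by blast
  thus ?thesis
    unfolding lqc_modification_eq_polar_topology[OF assms] g_barrelled_def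
      Gamma_polar_topology[OF assms] by blast
qed

end
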